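(* Let $Q$ be a right Leibniz algebra which is a weak algebra of quotients of its subalgebra $L$, and let $I$ be an ideal of $L$. If $\mathrm{Ann}_L(I)=\{0\}$ then $\mathrm{Ann}_Q(I)=\{0\}$, and if $\mathrm{ran}_L(I)=\{0\}$ then $\mathrm{ran}_Q(I)=\{0\}$.
   Context: A right Leibniz algebra satisfies $[x,[y,z]]=[[x,y],z]-[[x,z],y]$. Ideals of $L$: subspaces $I$ with $[I,L]\subseteq I$, $[L,I]\subseteq I$. For $X\in\{L,Q\}$: $\mathrm{ran}_X(I)=\{u\in X:[y,u]=0\ \forall y\in I\}$, $\mathrm{Ann}_X(I)=\{u\in X:[u,y]=[y,u]=0\ \forall y\in I\}$. $Q$ is a weak algebra of quotients of $L$ if for every $0\ne q\in Q$ there is $x\in L$ with $0\ne[q,x]\in L$ or $y\in L$ with $0\ne[y,q]\in L$. *)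

theory Defs
  imports Main "HOL.Vector_Spaces"
begin

definition right_leibniz_algebra ::
  "('k::field \<Rightarrow> 'v::ab_group_add \<Rightarrow> 'v) \<Rightarrow> ('v \<Rightarrow> 'v \<Rightarrow> 'v) \<Rightarrow> bool" where
  "right_leibniz_algebra scale br \<longleftrightarrow>
     vector_space scale \<and>
     (\<forall>x y z. br (x + y) z = br x z + br y z) \<and>
     (\<forall>x y z. br x (y + z) = br x y + br x z) \<and>
     (\<forall>a x y. br (scale a x) y = scale a (br x y)) \<and>
     (\<forall>a x y. br x (scale a y) = scale a (br x y)) \<and>
     (\<forall>x y z. br x (br y z) = br (br x y) z - br (br x z) y)"

definition subalgebra ::
  "('k::field \<Rightarrow> 'v::ab_group_add \<Rightarrow> 'v) \<Rightarrow> ('v \<Rightarrow> 'v \<Rightarrow> 'v) \<Rightarrow> 'v set \<Rightarrow> bool" where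
  "subalgebra scale br L \<longleftrightarrow>
     module.subspace scale L \<and> (\<forall>x\<in>L. \<forall>y\<in>L. br x y \<in> L)"

definition ideal_of ::
  "('k::field \<Rightarrow> 'v::ab_group_add \<Rightarrow> 'v) \<Rightarrow> ('v \<Rightarrow> 'v \<Rightarrow> 'v) \<Rightarrow> 'v set \<Rightarrow> 'v set \<Rightarrow> bool" where
  "ideal_of scale br L I \<longleftrightarrow>
     module.subspace scale I \<and> I \<subseteq> L \<and>
     (\<forall>x\<in>I. \<forall>y\<in>L. br x y \<in> I) \<and> (\<forall>x\<in>I. \<forall>y\<in>L. br y x \<in> I)"

definition r_ann :: "('v::zero \<Rightarrow> 'v \<Rightarrow> 'v) \<Rightarrow> 'v set \<Rightarrow> 'v set \<Rightarrow> 'v set" where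
  "r_ann br X I = {u \<in> X. \<forall>y\<in>I. br y u = 0}"

definition Ann :: "('v::zero \<Rightarrow> 'v \<Rightarrow> 'v) \<Rightarrow> 'v set \<Rightarrow> 'v set \<Rightarrow> 'v set" where
  "Ann br X I = {u \<in> X. \<forall>y\<in>I. br u y = 0 \<and> br y u = 0}"

text \<open>The ambient algebra Q (the whole type) is a weak algebra of quotients of L.\<close>
definition weak_algebra_of_quotients :: "('v::zero \<Rightarrow> 'v \<Rightarrow> 'v) \<Rightarrow> 'v set \<Rightarrow> bool" where
  "weak_algebra_of_quotients br L \<longleftrightarrow>
     (\<forall>q. q \<noteq> 0 \<longrightarrow>
        (\<exists>x\<in>L. br q x \<noteq> 0 \<and> br q x \<in> L) \<or> (\<exists>y\<in>L. br y q \<noteq> 0 \<and> br y q \<in> L))"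

end

theory Submission
  imports Defs
begin

text \<open>Both annihilators of I in Q are stable under bracketing with elements of L on either
side, by the Leibniz identity and because I is an ideal of L. If q \<noteq> 0 lay in one of them,
the weak-quotient property would move q to a nonzero element [q,x] or [x,q] of L that still
annihilates I, i.e. to a nonzero element of the corresponding annihilator in L.\<close>

lemma right_leibniz_algebra_bracket_zero:
  assumes "right_leibniz_algebra scale br"
  shows "br 0 z = 0" and "br z 0 = 0"
proof -
  have "br (0 + 0) z = br 0 z + br 0 z" "br z (0 + 0) = br z 0 + br z 0"
    using assms unfolding right_leibniz_algebra_def by blast+
  then show "br 0 z = 0" and "br z 0 = 0" by simp_all
qed

lemma right_leibniz_identity:
  assumes "right_leibniz_algebra scale br"
  shows "br x (br y z) = br (br x y) z - br (br x z) y"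
  using assms unfolding right_leibniz_algebra_def by blast

lemma right_leibniz_identity_left_nested:
  assumes "right_leibniz_algebra scale br"
  shows "br (br x y) z = br x (br y z) + br (br x z) y"
  using right_leibniz_identity[OF assms, of x y z] by (simp add: algebra_simps)

lemma zero_mem_r_ann:
  assumes "right_leibniz_algebra scale br" and "0 \<in> X"
  shows "0 \<in> r_ann br X I"
  using assms right_leibniz_algebra_bracket_zero unfolding r_ann_def by blast

lemma zero_mem_Ann:
  assumes "right_leibniz_algebra scale br" and "0 \<in> X"
  shows "0 \<in> Ann br X I"
  using assms right_leibniz_algebra_bracket_zero unfolding Ann_def by blast

lemma r_ann_bracket_closed:
  assumes alg: "right_leibniz_algebra scale br" and ideal: "ideal_of scale br L I"
    and q: "q \<in> r_ann br UNIV I" and x: "x \<in> L"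
  shows "br q x \<in> r_ann br UNIV I" and "br x q \<in> r_ann br UNIV I"
proof -
  have q_ann: "br y q = 0" if "y \<in> I" for y
    using q that unfolding r_ann_def by blast
  have yx: "br y x \<in> I" if "y \<in> I" for y
    using ideal x that unfolding ideal_of_def by blast
  have "br y (br q x) = 0" and "br y (br x q) = 0" if y: "y \<in> I" for y
  proof -
    have "br (br y x) q = 0" "br (br y q) x = 0"
      using q_ann[OF yx[OF y]] q_ann[OF y] right_leibniz_algebra_bracket_zero[OF alg] by simp_all
    then show "br y (br q x) = 0" and "br y (br x q) = 0"
      using right_leibniz_identity[OF alg, of y q x] right_leibniz_identity[OF alg, of y x q]
      by simp_all
  qed
  then show "br q x \<in> r_ann br UNIV I" and "br x q \<in> r_ann br UNIV I"
    unfolding r_ann_def by blast+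
qed

lemma Ann_bracket_closed:
  assumes alg: "right_leibniz_algebra scale br" and ideal: "ideal_of scale br L I"
    and q: "q \<in> Ann br UNIV I" and x: "x \<in> L"
  shows "br q x \<in> Ann br UNIV I" and "br x q \<in> Ann br UNIV I"
proof -
  have q_ann: "br q y = 0" "br y q = 0" if "y \<in> I" for y
    using q that unfolding Ann_def by blast+
  have yx: "br y x \<in> I" and xy: "br x y \<in> I" if "y \<in> I" for y
    using ideal x that unfolding ideal_of_def by blast+
  have "br (br q x) y = 0" and "br (br x q) y = 0" if y: "y \<in> I" for y
  proof -
    have "br q (br x y) = 0" "br (br q y) x = 0" "br x (br q y) = 0" "br (br x y) q = 0"
      using q_ann[OF xy[OF y]] q_ann[OF y] right_leibniz_algebra_bracket_zero[OF alg]
      by simp_all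
    then show "br (br q x) y = 0" and "br (br x q) y = 0"
      using right_leibniz_identity_left_nested[OF alg, of q x y]
        right_leibniz_identity_left_nested[OF alg, of x q y]
      by simp_all
  qed
  moreover have "br y (br q x) = 0" and "br y (br x q) = 0" if "y \<in> I" for y
    using r_ann_bracket_closed[OF alg ideal _ x, of q] q_ann that unfolding r_ann_def by blast+
  ultimately show "br q x \<in> Ann br UNIV I" and "br x q \<in> Ann br UNIV I"
    unfolding Ann_def by blast+
qed

lemma weak_algebra_of_quotients_stable_set_zero:
  assumes "weak_algebra_of_quotients br L"
    and "A \<inter> L \<subseteq> {0}"
    and "\<And>q x. q \<in> A \<Longrightarrow> x \<in> L \<Longrightarrow> br q x \<in> A \<and> br x q \<in> A"
  shows "A \<subseteq> {0}"
proof
  fix q assume "q \<in> A"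
  show "q \<in> {0}"
  proof (rule ccontr)
    assume "q \<notin> {0}"
    then obtain x where "x \<in> L" and "br q x \<in> L - {0} \<or> br x q \<in> L - {0}"
      using assms(1) unfolding weak_algebra_of_quotients_def by blast
    then show False
      using assms(2,3) \<open>q \<in> A\<close> by blast
  qed
qed

theorem proposition3p11:
  fixes scale :: "'k::field \<Rightarrow> 'v::ab_group_add \<Rightarrow> 'v"
    and br :: "'v \<Rightarrow> 'v \<Rightarrow> 'v"
    and L I :: "'v set"
  assumes "right_leibniz_algebra scale br"
    and "subalgebra scale br L"
    and "weak_algebra_of_quotients br L"
    and "ideal_of scale br L I"
  shows "(Ann br L I = {0} \<longrightarrow> Ann br UNIV I = {0})
       \<and> (r_ann br L I = {0} \<longrightarrow> r_ann br UNIV I = {0})"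
proof (intro conjI impI)
  assume "Ann br L I = {0}"
  then have "Ann br UNIV I \<inter> L \<subseteq> {0}"
    unfolding Ann_def by blast
  with assms(3) have "Ann br UNIV I \<subseteq> {0}"
    by (rule weak_algebra_of_quotients_stable_set_zero)
      (simp add: Ann_bracket_closed[OF assms(1,4)])
  then show "Ann br UNIV I = {0}"
    using zero_mem_Ann[OF assms(1)] by blast
next
  assume "r_ann br L I = {0}"
  then have "r_ann br UNIV I \<inter> L \<subseteq> {0}"
    unfolding r_ann_def by blast
  with assms(3) have "r_ann br UNIV I \<subseteq> {0}"
    by (rule weak_algebra_of_quotients_stable_set_zero)
      (simp add: r_ann_bracket_closed[OF assms(1,4)])
  then show "r_ann br UNIV I = {0}"
    using zero_mem_r_ann[OF assms(1)] by blast
qed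

end
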